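(* Let $a\in(0,2\pi)$ and $\varepsilon\in(0,1)$. Then $T_0(v,a,\varepsilon)<+\infty$ for all speeds $v>0$ except for a finite number of critical speeds. Moreover: $T_0(v,a,\varepsilon)\sim\frac{\pi-a}{v}$ as $v\to0$; if $v>v_1=\frac{2\pi-a+2\varepsilon}{2\varepsilon}$ then $T_0(v,a,\varepsilon)<\infty$, and $T_0(v,a,\varepsilon)\to\pi-2\varepsilon$ as $v\to+\infty$. Besides, if $v\in\mathbb{Q}$ (with $v>0$), then there exist $a_0>0$ and $\varepsilon_0>0$ such that $T_0(v,a,\varepsilon)=+\infty$ for every $a\in(0,a_0)$ and every $\varepsilon\in(0,\varepsilon_0)$.
   Context: $\Omega=S^2$ is the unit sphere of $\mathbb{R}^3$ with the induced metric, described in spherical coordinates $(\theta,\varphi)$, $\varphi$ the latitude ($\varphi=0$ the equator) and $\theta$ the longitude. For $a\in(0,2\pi)$, $\varepsilon\in(0,\pi/2)$ and $v>0$, set $\omega(t)=\{(\theta,\varphi): |\varphi|<\varepsilon,\ vt<\theta<vt+a\}$ (longitude taken mod $2\pi$) and $Q=\{(t,x)\in\mathbb{R}\times S^2: x\in\omega(t)\}$. Rays are the unit-speed geodesics $t\mapsto x(t)$, $t\in\mathbb{R}$, of $S^2$ (great circles traversed at unit speed). $(Q,T)$ satisfies the time-dependent geometric control condition if every ray $x(\cdot)$ admits $t\in(0,T)$ with $x(t)\in\omega(t)$; the control time is $T_0(v,a,\varepsilon)=\inf\{T>0:(Q,T)\text{ satisfies this condition}\}$, with $T_0=+\infty$ if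 no such $T$ exists. *)

theory Defs
  imports "HOL-Analysis.Analysis"
begin

definition sph :: "real \<Rightarrow> real \<Rightarrow> real^3" where
  "sph th ph = vector [cos ph * cos th, cos ph * sin th, sin ph]"

text \<open>The moving control region omega(t) (longitude taken mod 2 pi, realised by
  allowing any representative th of the longitude).\<close>
definition omega :: "real \<Rightarrow> real \<Rightarrow> real \<Rightarrow> real \<Rightarrow> (real^3) set" where
  "omega v a \<epsilon> t = {sph th ph | th ph. \<bar>ph\<bar> < \<epsilon> \<and> v * t < th \<and> th < v * t + a}"

definition is_ray :: "(real \<Rightarrow> real^3) \<Rightarrow> bool" where
  "is_ray x \<longleftrightarrow> (\<exists>p q. norm p = 1 \<and> norm q = 1 \<and> inner p q = 0 \<and>
                        (\<forall>t. x t = cos t *\<^sub>R p + sin t *\<^sub>R q))"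

definition GCC :: "real \<Rightarrow> real \<Rightarrow> real \<Rightarrow> real \<Rightarrow> bool" where
  "GCC v a \<epsilon> T \<longleftrightarrow> (\<forall>x. is_ray x \<longrightarrow> (\<exists>t. 0 < t \<and> t < T \<and> x t \<in> omega v a \<epsilon> t))"

text \<open>Control time; Inf of the empty set of ereals is +infinity.\<close>
definition T0 :: "real \<Rightarrow> real \<Rightarrow> real \<Rightarrow> ereal" where
  "T0 v a \<epsilon> = Inf {ereal T | T. T > 0 \<and> GCC v a \<epsilon> T}"

end

theory Submission
  imports Defs
begin

text \<open>Every ray crosses the equator once in each time interval of length \<open>\<pi>\<close>, at antipodal
  points, and at time offset \<open>s\<close> from a crossing its latitude is at most \<open>|s|\<close>. Relative to the
  window, the longitude of the \<open>k\<close>-th crossing is \<open>C + k\<pi>(1 - v)\<close> modulo \<open>2\<pi>\<close>. If some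
  \<open>k\<pi>(1 - v)\<close> lies within \<open>a\<close> of, but not on, a multiple of \<open>2\<pi>\<close>, then every \<open>k\<close>-th crossing
  drifts by less than the window and eventually lands in it; by Dirichlet's approximation
  theorem only the finitely many resonant speeds \<open>v = 1 - 2h/k\<close> (with \<open>k\<close> bounded in terms of
  \<open>a\<close>, and \<open>v\<close> bounded since fast windows sweep over a whole neighbourhood of a crossing) can
  then be critical. Slow windows pass the crossings in steps of \<open>2\<pi>v\<close>, which costs about
  \<open>(\<pi> - a)/v\<close>, and a meridian shows this is sharp; fast windows only have to wait for the
  ray tangent to latitude \<open>\<epsilon>\<close>, which stays outside the band for time \<open>\<pi> - 2\<epsilon>\<close>. For
  \<open>v = P/Q\<close>, the meridian through longitude \<open>\<pi>/(2Q)\<close> is near the equator only at times near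
  \<open>\<pi>\<int>\<close>, when the window's edge is near \<open>(\<pi>/Q)\<int>\<close>, so short and thin windows never meet it.\<close>

definition angle_in_arc :: "real \<Rightarrow> real \<Rightarrow> bool" where
  "angle_in_arc a y \<longleftrightarrow> (\<exists>m::int. 0 < y + 2*pi * of_int m \<and> y + 2*pi * of_int m < a)"

section \<open>Rays and the equator\<close>

lemma sph_nth [simp]:
  "sph th ph $ 1 = cos ph * cos th" "sph th ph $ 2 = cos ph * sin th" "sph th ph $ 3 = sin ph"
  by (simp_all add: sph_def)

lemma vec3_eq_iff: "(x::real^3) = y \<longleftrightarrow> x$1 = y$1 \<and> x$2 = y$2 \<and> x$3 = y$3"
proof
  assume "x$1 = y$1 \<and> x$2 = y$2 \<and> x$3 = y$3"
  then show "x = y" unfolding vec_eq_iff using exhaust_3 by metis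
qed simp

lemma inner_vec3: "inner (x::real^3) y = x$1 * y$1 + x$2 * y$2 + x$3 * y$3"
  by (simp add: inner_vec_def sum_3)

lemma norm_vec3_eq_1: "norm (x::real^3) = 1 \<longleftrightarrow> (x$1)\<^sup>2 + (x$2)\<^sup>2 + (x$3)\<^sup>2 = 1"
  by (simp add: norm_eq_1 inner_vec3 power2_eq_square)

lemma sph_add_int_mult_2pi: "sph (th + 2*pi * of_int m) ph = sph th ph"
  by (simp add: vec3_eq_iff cos_add sin_add)

lemma sph_equator_add_nat_mult_pi: "sph (th + real k * pi) 0 = (-1)^k *\<^sub>R sph th 0"
  by (simp add: vec3_eq_iff cos_add sin_add)

lemma in_omegaI:
  assumes "y = sph th ph" "\<bar>ph\<bar> < \<epsilon>" "angle_in_arc a (th - v * t)"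
  shows "y \<in> omega v a \<epsilon> t"
proof -
  obtain m :: int where "0 < th - v * t + 2*pi * of_int m" "th - v * t + 2*pi * of_int m < a"
    using assms(3) unfolding angle_in_arc_def by blast
  then show ?thesis
    unfolding omega_def using assms(1,2) sph_add_int_mult_2pi[of th m ph]
    by (intro CollectI exI[of _ "th + 2*pi * of_int m"] exI[of _ ph]) auto
qed

lemma ray_add_pi: "is_ray x \<Longrightarrow> x (t + pi) = - x t"
  unfolding is_ray_def by auto

lemma ray_add_nat_mult_pi: "is_ray x \<Longrightarrow> x (t + real k * pi) = (-1)^k *\<^sub>R x t"
  unfolding is_ray_def by (auto simp: cos_add sin_add scaleR_add_right mult.commute)

lemma is_ray_shift:
  assumes "is_ray x" shows "is_ray (\<lambda>s. x (t + s))"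
proof -
  obtain p q where pq: "norm p = 1" "norm q = 1" "inner p q = 0" "\<And>u. x u = cos u *\<^sub>R p + sin u *\<^sub>R q"
    using assms unfolding is_ray_def by auto
  define p' where "p' = cos t *\<^sub>R p + sin t *\<^sub>R q"
  define q' where "q' = (- sin t) *\<^sub>R p + cos t *\<^sub>R q"
  have pp: "inner p p = 1" "inner q q = 1" using pq(1,2) by (simp_all add: norm_eq_1)
  have "inner p' p' = (cos t)\<^sup>2 * inner p p + (sin t)\<^sup>2 * inner q q + 2 * cos t * sin t * inner p q"
    unfolding p'_def by (simp add: inner_add_left inner_add_right inner_commute power2_eq_square algebra_simps)
  then have "norm p' = 1" using pp pq(3) by (simp add: norm_eq_1)
  moreover have "inner q' q' = (sin t)\<^sup>2 * inner p p + (cos t)\<^sup>2 * inner q q - 2 * cos t * sin t * inner p q"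
    unfolding q'_def by (simp add: inner_add_left inner_add_right inner_commute power2_eq_square algebra_simps)
  then have "norm q' = 1" using pp pq(3) by (simp add: norm_eq_1)
  moreover have "inner p' q' = sin t * cos t * (inner q q - inner p p) + ((cos t)\<^sup>2 - (sin t)\<^sup>2) * inner p q"
    unfolding p'_def q'_def by (simp add: inner_add_left inner_add_right inner_commute power2_eq_square algebra_simps)
  then have "inner p' q' = 0" using pp pq(3) by simp
  moreover have "x (t + s) = cos s *\<^sub>R p' + sin s *\<^sub>R q'" for s
    unfolding p'_def q'_def pq(4) by (simp add: cos_add sin_add algebra_simps)
  ultimately show ?thesis unfolding is_ray_def by blast
qed

lemma ray_crosses_equator:
  assumes "is_ray x" obtains t0 where "0 < t0" "t0 \<le> pi" "x t0 $ 3 = 0"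
proof -
  obtain p q where pq: "\<And>t. x t = cos t *\<^sub>R p + sin t *\<^sub>R q" using assms unfolding is_ray_def by auto
  define f where "f t = cos t * p$3 + sin t * q$3" for t
  have x3: "x t $ 3 = f t" for t using pq by (simp add: f_def)
  have "continuous_on {0..pi} f" unfolding f_def by (intro continuous_intros)
  moreover have "f pi = - f 0" by (simp add: f_def)
  ultimately have "\<exists>t\<in>{0..pi}. f t = 0"
    using IVT'[of f 0 0 pi] IVT2'[of f pi 0 0] by (cases "f 0 \<ge> 0") auto
  then obtain t where t: "t \<in> {0..pi}" "f t = 0" by auto
  show ?thesis
  proof (cases "t = 0")
    case True
    then have "f pi = 0" using t by (simp add: f_def)
    then show ?thesis using that[of pi] x3 by auto
  qed (use that[of t] t x3 in auto)
qed

lemma sph_arctan_arcsin: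
  assumes cs: "c\<^sup>2 + \<sigma>\<^sup>2 = 1" and s: "\<bar>s\<bar> < pi/2"
  shows "sph (th + arctan (c * tan s)) (arcsin (\<sigma> * sin s)) =
    vector [cos s * cos th - c * sin s * sin th, cos s * sin th + c * sin s * cos th, \<sigma> * sin s]"
proof -
  have cos_pos: "cos s > 0" using s by (intro cos_gt_zero_pi) auto
  have tan: "cos s * tan s = sin s" using cos_pos by (simp add: tan_def)
  define Q where "Q = sqrt (1 + (c * tan s)\<^sup>2)"
  have Q_pos: "Q > 0" unfolding Q_def by (simp add: add_pos_nonneg)
  have "\<bar>\<sigma>\<bar> \<le> 1" using cs by (metis abs_le_square_iff abs_one le_add_same_cancel2 one_power2 zero_le_power2)
  then have \<sigma>_sin: "\<bar>\<sigma> * sin s\<bar> \<le> 1" using abs_sin_le_one[of s] by (simp add: abs_mult mult_le_one)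
  define ph where "ph = arcsin (\<sigma> * sin s)"
  define l where "l = arctan (c * tan s)"
  have "(cos s * Q)\<^sup>2 = (cos s)\<^sup>2 + c\<^sup>2 * (cos s * tan s)\<^sup>2"
    unfolding Q_def by (simp add: power_mult_distrib algebra_simps)
  also have "\<dots> = 1 - (\<sigma> * sin s)\<^sup>2"
    using cs sin_cos_squared_add[of s] unfolding tan power_mult_distrib by algebra
  finally have "cos ph = cos s * Q"
    using \<sigma>_sin cos_pos Q_pos unfolding ph_def by (simp add: cos_arcsin real_sqrt_unique)
  then have cl: "cos ph * cos l = cos s" and sl: "cos ph * sin l = c * sin s"
    using Q_pos tan unfolding l_def Q_def by (simp_all add: cos_arctan sin_arctan)
  have "cos ph * cos (th + l) = cos s * cos th - c * sin s * sin th"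
    unfolding cl[symmetric] sl[symmetric] by (simp add: cos_add algebra_simps)
  moreover have "cos ph * sin (th + l) = cos s * sin th + c * sin s * cos th"
    unfolding cl[symmetric] sl[symmetric] by (simp add: sin_add algebra_simps)
  moreover have "sin ph = \<sigma> * sin s" unfolding ph_def using \<sigma>_sin by simp
  ultimately show ?thesis
    unfolding ph_def[symmetric] l_def[symmetric] by (simp add: vec3_eq_iff)
qed

lemma ray_near_equator:
  assumes "is_ray x" "x tn $ 3 = 0"
  obtains th c \<sigma> where "c\<^sup>2 + \<sigma>\<^sup>2 = 1"
    "\<And>s. \<bar>s\<bar> < pi/2 \<Longrightarrow> x (tn + s) = sph (th + arctan (c * tan s)) (arcsin (\<sigma> * sin s))"
proof -
  obtain p q where pq: "norm p = 1" "norm q = 1" "inner p q = 0"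
    and x: "\<And>s. x (tn + s) = cos s *\<^sub>R p + sin s *\<^sub>R q"
    using is_ray_shift[OF assms(1), of tn] unfolding is_ray_def by auto
  have p3: "p$3 = 0" using x[of 0] assms(2) by simp
  then have "(p$1)\<^sup>2 + (p$2)\<^sup>2 = 1" using pq(1) by (simp add: norm_vec3_eq_1)
  then obtain th where th: "p$1 = cos th" "p$2 = sin th" by (metis sincos_total_2pi)
  define c where "c = q$2 * cos th - q$1 * sin th"
  have pq0: "q$1 * cos th + q$2 * sin th = 0" using pq(3) p3 th by (simp add: inner_vec3 algebra_simps)
  have q1: "q$1 = - c * sin th"
    using pq0 sin_cos_squared_add[of th] unfolding c_def power2_eq_square by algebra
  have q2: "q$2 = c * cos th"
    using pq0 sin_cos_squared_add[of th] unfolding c_def power2_eq_square by algebra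
  have cs: "c\<^sup>2 + (q$3)\<^sup>2 = 1"
    using pq(2) sin_cos_squared_add[of th] unfolding norm_vec3_eq_1 q1 q2 power2_eq_square by algebra
  show ?thesis
  proof (rule that[OF cs])
    fix s :: real assume s: "\<bar>s\<bar> < pi/2"
    show "x (tn + s) = sph (th + arctan (c * tan s)) (arcsin (q$3 * sin s))"
      unfolding x sph_arctan_arcsin[OF cs s] by (simp add: vec3_eq_iff p3 th q1 q2 algebra_simps)
  qed
qed

section \<open>Meeting the window near a crossing\<close>

lemma abs_sin_eq_sin_abs: "\<bar>x\<bar> \<le> pi \<Longrightarrow> \<bar>sin x\<bar> = sin \<bar>x\<bar>"
  using sin_ge_zero[of x] sin_ge_zero[of "-x"] by (cases "x \<ge> 0") auto

lemma abs_arcsin_mult_sin_le: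
  assumes "\<bar>\<sigma>\<bar> \<le> 1" "\<bar>s\<bar> \<le> pi/2"
  shows "\<bar>arcsin (\<sigma> * sin s)\<bar> \<le> \<bar>s\<bar>"
proof -
  have y: "\<bar>\<sigma> * sin s\<bar> \<le> 1" using assms(1) abs_sin_le_one[of s] by (simp add: abs_mult mult_le_one)
  define ph where "ph = arcsin (\<sigma> * sin s)"
  have ph: "\<bar>ph\<bar> \<le> pi/2" unfolding ph_def using y arcsin_bounded[of "\<sigma> * sin s"] by (auto simp: abs_le_iff)
  have "sin ph = \<sigma> * sin s" unfolding ph_def using y by simp
  then have "\<bar>sin ph\<bar> \<le> \<bar>sin s\<bar>" using assms(1) by (simp add: abs_mult mult_left_le_one_le)
  then have "sin \<bar>ph\<bar> \<le> sin \<bar>s\<bar>" using abs_sin_eq_sin_abs[of ph] abs_sin_eq_sin_abs[of s] ph assms(2) by simp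
  then show ?thesis unfolding ph_def[symmetric] using ph assms(2) by (subst (asm) sin_mono_le_eq) auto
qed

lemma abs_arctan_mult_tan_le:
  assumes "\<bar>c\<bar> \<le> 1" "\<bar>s\<bar> < pi/2"
  shows "\<bar>arctan (c * tan s)\<bar> \<le> \<bar>s\<bar>"
proof -
  have abs_arctan: "\<bar>arctan y\<bar> = arctan \<bar>y\<bar>" for y
    by (cases "y \<ge> 0") (auto simp: arctan_minus[symmetric] arctan_le_zero_iff)
  have "\<bar>tan s\<bar> = tan \<bar>s\<bar>"
    using tan_pos_pi2_le[of s] tan_pos_pi2_le[of "-s"] assms(2) by (cases "s \<ge> 0") auto
  then have "\<bar>arctan (c * tan s)\<bar> \<le> arctan (tan \<bar>s\<bar>)"
    using assms(1) by (auto simp: abs_arctan abs_mult mult_left_le_one_le intro: arctan_monotone')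
  also have "\<dots> = \<bar>s\<bar>" using assms(2) by (intro arctan_tan) auto
  finally show ?thesis .
qed

lemma exists_int_shift_into_2pi: "\<exists>m::int. 0 < y + 2*pi * of_int m \<and> y + 2*pi * of_int m \<le> 2*pi"
proof -
  define k where "k = \<lceil>y / (2*pi)\<rceil>"
  have "of_int k - 1 < y / (2*pi)" "y / (2*pi) \<le> of_int k" unfolding k_def by linarith+
  then have "of_int k * (2*pi) - 2*pi < y" "y \<le> of_int k * (2*pi)" by (simp_all add: field_simps)
  then show ?thesis by (intro exI[of _ "1 - k"]) (simp add: algebra_simps)
qed

lemma continuous_meets_interval_mod_2pi:
  fixes f :: "real \<Rightarrow> real"
  assumes "continuous_on {s1..s2} f" "s1 \<le> s2" "f s1 - f s2 > 2*pi - a" "0 < a"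
  obtains s where "s1 \<le> s" "s \<le> s2" "angle_in_arc a (f s)"
proof -
  obtain m :: int where m: "0 < f s1 + 2*pi * of_int m" "f s1 + 2*pi * of_int m \<le> 2*pi"
    using exists_int_shift_into_2pi by blast
  define g where "g s = f s + 2*pi * of_int m" for s
  show ?thesis
  proof (cases "g s1 < a")
    case True
    then show ?thesis using m assms(2) unfolding g_def by (intro that[of s1]) (auto simp: angle_in_arc_def)
  next
    case False
    have "g s2 < a" using assms(3) m unfolding g_def by linarith
    define \<tau> where "\<tau> = (max (g s2) 0 + a) / 2"
    have \<tau>: "g s2 \<le> \<tau>" "\<tau> \<le> g s1" "0 < \<tau>" "\<tau> < a"
      using False \<open>g s2 < a\<close> assms(4) unfolding \<tau>_def by auto
    have "continuous_on {s1..s2} g" unfolding g_def by (intro continuous_intros assms(1))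
    then obtain s where "s1 \<le> s" "s \<le> s2" "g s = \<tau>" using IVT2'[of g s2 \<tau> s1] \<tau> assms(2) by auto
    then show ?thesis using \<tau> unfolding g_def by (intro that[of s]) (auto simp: angle_in_arc_def)
  qed
qed

text \<open>The hypothesis \<open>gain\<close> says that between the times \<open>tn + s1\<close> and \<open>tn + s2\<close> the window's
  longitude gains more than \<open>2\<pi> - a\<close> on the ray's, whatever the inclination \<open>c\<close> of the ray.\<close>

lemma ray_meets_omega_near_equator:
  assumes ray: "is_ray x" and cross: "x tn $ 3 = 0" and \<epsilon>: "\<epsilon> \<le> pi/2" and "0 < a"
    and s: "-\<epsilon> < s1" "s1 \<le> s2" "s2 < \<epsilon>" "0 < tn + s1" "tn + s2 < T"
    and gain: "\<And>c. \<bar>c\<bar> \<le> 1 \<Longrightarrow> v * (s2 - s1) - (arctan (c * tan s2) - arctan (c * tan s1)) > 2*pi - a"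
  shows "\<exists>t. 0 < t \<and> t < T \<and> x t \<in> omega v a \<epsilon> t"
proof -
  obtain th c \<sigma> where cs: "c\<^sup>2 + \<sigma>\<^sup>2 = 1"
    and x: "\<And>s. \<bar>s\<bar> < pi/2 \<Longrightarrow> x (tn + s) = sph (th + arctan (c * tan s)) (arcsin (\<sigma> * sin s))"
    using ray_near_equator[OF ray cross] by metis
  have c: "\<bar>c\<bar> \<le> 1" using cs by (metis abs_le_square_iff abs_one le_add_same_cancel1 one_power2 zero_le_power2)
  have \<sigma>: "\<bar>\<sigma>\<bar> \<le> 1" using cs by (metis abs_le_square_iff abs_one le_add_same_cancel2 one_power2 zero_le_power2)
  define f where "f s = th + arctan (c * tan s) - v * (tn + s)" for s
  have "cos s \<noteq> 0" if "s \<in> {s1..s2}" for s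
    using that s \<epsilon> cos_gt_zero_pi[of s] by auto
  then have "continuous_on {s1..s2} f" unfolding f_def by (intro continuous_intros) auto
  moreover have "f s1 - f s2 > 2*pi - a" using gain[OF c] unfolding f_def by (simp add: algebra_simps)
  ultimately obtain s where sm: "s1 \<le> s" "s \<le> s2" "angle_in_arc a (f s)"
    using continuous_meets_interval_mod_2pi s(2) \<open>0 < a\<close> by metis
  have "\<bar>arcsin (\<sigma> * sin s)\<bar> < \<epsilon>" using abs_arcsin_mult_sin_le[OF \<sigma>, of s] sm s \<epsilon> by linarith
  then have "x (tn + s) \<in> omega v a \<epsilon> (tn + s)"
    using sm s \<epsilon> by (intro in_omegaI[OF x]) (auto simp: f_def diff_add_eq)
  then show ?thesis using sm s by (intro exI[of _ "tn + s"]) auto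
qed

lemma ray_equator_crossings:
  assumes "is_ray x" "x t0 $ 3 = 0"
  obtains th where "\<And>k::nat. x (t0 + real k * pi) = sph (th + real k * pi) 0"
proof -
  obtain th c \<sigma> where "\<And>s. \<bar>s\<bar> < pi/2 \<Longrightarrow> x (t0 + s) = sph (th + arctan (c * tan s)) (arcsin (\<sigma> * sin s))"
    using ray_near_equator[OF assms] by metis
  from this[of 0] have "x t0 = sph th 0" by simp
  then show ?thesis
    by (intro that[of th]) (simp add: ray_add_nat_mult_pi[OF assms(1)] sph_equator_add_nat_mult_pi)
qed

text \<open>Here \<open>C\<close> stands for \<open>\<theta> - v t0\<close>, where the ray crosses the equator at the times
  \<open>t0 + k\<pi>\<close> at the longitudes \<open>\<theta> + k\<pi>\<close>.\<close>

lemma GCC_if_crossing_in_window: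
  assumes "0 < \<epsilon>" "pi + K < T"
    and window: "\<And>C. \<exists>k::nat. real k * pi \<le> K \<and> angle_in_arc a (C + real k * pi * (1 - v))"
  shows "GCC v a \<epsilon> T"
  unfolding GCC_def
proof (intro allI impI)
  fix x assume ray: "is_ray x"
  obtain t0 where t0: "0 < t0" "t0 \<le> pi" "x t0 $ 3 = 0" using ray_crosses_equator[OF ray] by metis
  obtain th where x: "\<And>k::nat. x (t0 + real k * pi) = sph (th + real k * pi) 0"
    using ray_equator_crossings[OF ray t0(3)] by metis
  obtain k :: nat where k: "real k * pi \<le> K" "angle_in_arc a (th - v * t0 + real k * pi * (1 - v))"
    using window by blast
  have "x (t0 + real k * pi) \<in> omega v a \<epsilon> (t0 + real k * pi)"
    using k(2) assms(1) by (intro in_omegaI[OF x]) (auto simp: algebra_simps)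
  moreover have "0 < t0 + real k * pi" using t0(1) by (simp add: add_pos_nonneg)
  moreover have "t0 + real k * pi < T" using t0 k assms(2) by linarith
  ultimately show "\<exists>t>0. t < T \<and> x t \<in> omega v a \<epsilon> t" by blast
qed

lemma exists_nat_step_into_interval:
  assumes "0 < h" "h < a" "0 < y"
  shows "\<exists>j::nat. 0 < y - real j * h \<and> y - real j * h < a \<and> real j * h \<le> max 0 (y - a) + h"
proof (cases "y < a")
  case True then show ?thesis using assms by (intro exI[of _ 0]) auto
next
  case False
  define f where "f = \<lfloor>(y - a) / h\<rfloor>"
  have "0 \<le> f" unfolding f_def using False assms by simp
  have "real_of_int f \<le> (y - a)/h" "(y - a)/h < real_of_int f + 1" unfolding f_def by linarith+
  then have "real_of_int f * h \<le> y - a" "y - a < (real_of_int f + 1) * h"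
    using assms by (simp_all add: field_simps)
  moreover have "real (nat f + 1) = real_of_int f + 1" using \<open>0 \<le> f\<close> by simp
  ultimately show ?thesis using assms False by (intro exI[of _ "nat f + 1"]) (auto simp: algebra_simps)
qed

lemma angle_in_arc_add_int_mult_2pi: "angle_in_arc a (y + 2*pi * of_int n) \<longleftrightarrow> angle_in_arc a y"
  unfolding angle_in_arc_def
proof
  assume "\<exists>m::int. 0 < y + 2*pi * of_int n + 2*pi * of_int m \<and> y + 2*pi * of_int n + 2*pi * of_int m < a"
  then obtain m :: int where "0 < y + 2*pi * of_int n + 2*pi * of_int m" "y + 2*pi * of_int n + 2*pi * of_int m < a"
    by blast
  then show "\<exists>m::int. 0 < y + 2*pi * of_int m \<and> y + 2*pi * of_int m < a"
    by (intro exI[of _ "n + m"]) (simp add: algebra_simps)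
next
  assume "\<exists>m::int. 0 < y + 2*pi * of_int m \<and> y + 2*pi * of_int m < a"
  then obtain m :: int where "0 < y + 2*pi * of_int m" "y + 2*pi * of_int m < a" by blast
  then show "\<exists>m::int. 0 < y + 2*pi * of_int n + 2*pi * of_int m \<and> y + 2*pi * of_int n + 2*pi * of_int m < a"
    by (intro exI[of _ "m - n"]) (simp add: algebra_simps)
qed

lemma angle_in_arc_reflect: "angle_in_arc a (a - y) \<longleftrightarrow> angle_in_arc a y"
proof -
  have "angle_in_arc a (a - y) \<longleftrightarrow> (\<exists>m::int. 0 < y + 2*pi * of_int (-m) \<and> y + 2*pi * of_int (-m) < a)"
    unfolding angle_in_arc_def by (auto simp: algebra_simps)
  also have "\<dots> \<longleftrightarrow> angle_in_arc a y"
    unfolding angle_in_arc_def by (metis minus_minus)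
  finally show ?thesis .
qed

lemma progression_meets_arc:
  assumes "\<eta> \<noteq> 0" "\<bar>\<eta>\<bar> < a"
  shows "\<exists>j::nat. real j * \<bar>\<eta>\<bar> \<le> 2*pi + \<bar>\<eta>\<bar> \<and> angle_in_arc a (C + real j * \<eta>)"
proof -
  have descending: "\<exists>j::nat. real j * h \<le> 2*pi + h \<and> angle_in_arc a (D - real j * h)"
    if h: "0 < h" "h < a" for h D
  proof -
    obtain m :: int where m: "0 < D + 2*pi * of_int m" "D + 2*pi * of_int m \<le> 2*pi"
      using exists_int_shift_into_2pi by blast
    then obtain j :: nat where j: "0 < D + 2*pi * of_int m - real j * h"
      "D + 2*pi * of_int m - real j * h < a" "real j * h \<le> max 0 (D + 2*pi * of_int m - a) + h"
      using exists_nat_step_into_interval[OF h] by blast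
    have "real j * h \<le> 2*pi + h" using j(3) m h by linarith
    moreover have "angle_in_arc a (D - real j * h)"
      unfolding angle_in_arc_def using j(1,2) by (intro exI[of _ m]) (simp add: algebra_simps)
    ultimately show ?thesis by blast
  qed
  show ?thesis
  proof (cases "\<eta> < 0")
    case True
    then show ?thesis using descending[of "-\<eta>" C] assms by auto
  next
    case False
    then obtain j :: nat where "real j * \<eta> \<le> 2*pi + \<eta>" "angle_in_arc a (a - C - real j * \<eta>)"
      using descending[of \<eta> "a - C"] assms by auto
    then show ?thesis using False angle_in_arc_reflect[of a "C + real j * \<eta>"]
      by (intro exI[of _ j]) (auto simp: algebra_simps)
  qed
qed

section \<open>The control time and two test rays\<close>

lemma T0_le: "0 < T \<Longrightarrow> GCC v a \<epsilon> T \<Longrightarrow> T0 v a \<epsilon> \<le> ereal T"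
  unfolding T0_def by (rule Inf_lower) auto

lemma T0_less_infinity: "0 < T \<Longrightarrow> GCC v a \<epsilon> T \<Longrightarrow> T0 v a \<epsilon> < \<infinity>"
  using T0_le le_less_trans by fastforce

lemma T0_ge: "(\<And>T. 0 < T \<Longrightarrow> GCC v a \<epsilon> T \<Longrightarrow> L \<le> T) \<Longrightarrow> ereal L \<le> T0 v a \<epsilon>"
  unfolding T0_def by (rule Inf_greatest) auto

lemma T0_eq_infinity:
  assumes "\<And>T. 0 < T \<Longrightarrow> \<not> GCC v a \<epsilon> T" shows "T0 v a \<epsilon> = \<infinity>"
proof -
  have "{ereal T | T. T > 0 \<and> GCC v a \<epsilon> T} = {}" using assms by auto
  then show ?thesis unfolding T0_def by (metis Inf_empty top_ereal_def)
qed

definition meridian :: "real \<Rightarrow> real \<Rightarrow> real^3" where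
  "meridian \<alpha> t = cos t *\<^sub>R vector [cos \<alpha>, sin \<alpha>, 0] + sin t *\<^sub>R vector [0, 0, 1]"

lemma is_ray_meridian: "is_ray (meridian \<alpha>)"
  unfolding is_ray_def meridian_def
  by (intro exI[of _ "vector [cos \<alpha>, sin \<alpha>, 0]"] exI[of _ "vector [0, 0, 1]"])
     (simp add: norm_vec3_eq_1 inner_vec3)

lemma meridian_in_omega:
  assumes "meridian \<alpha> t \<in> omega v a \<epsilon> t" "\<epsilon> \<le> pi/2"
  obtains k :: int where "v * t < \<alpha> + of_int k * pi" "\<alpha> + of_int k * pi < v * t + a" "\<bar>sin t\<bar> < sin \<epsilon>"
proof -
  obtain th ph where tp: "meridian \<alpha> t = sph th ph" "\<bar>ph\<bar> < \<epsilon>" "v * t < th" "th < v * t + a"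
    using assms(1) unfolding omega_def by auto
  have c: "cos ph * cos th = cos t * cos \<alpha>" "cos ph * sin th = cos t * sin \<alpha>" "sin ph = sin t"
    using tp(1) unfolding vec3_eq_iff meridian_def by simp_all
  have "cos ph > 0" using tp(2) assms(2) by (intro cos_gt_zero_pi) auto
  moreover have "cos ph * sin (th - \<alpha>) = (cos ph * sin th) * cos \<alpha> - (cos ph * cos th) * sin \<alpha>"
    by (simp add: sin_diff algebra_simps)
  ultimately have "sin (th - \<alpha>) = 0" using c by simp
  then obtain k :: int where k: "th - \<alpha> = of_int k * pi" using sin_zero_iff_int2 by metis
  have "\<bar>sin t\<bar> = sin \<bar>ph\<bar>" using c(3) abs_sin_eq_sin_abs[of ph] tp(2) assms(2) by simp
  also have "\<dots> < sin \<epsilon>" using tp(2) assms(2) by (subst sin_mono_less_eq) auto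
  finally show ?thesis using that[of k] tp k by (simp add: algebra_simps)
qed

text \<open>The meridian through longitude \<open>0\<close> is first met by the window when its trailing edge
  has turned to longitude \<open>\<pi> - a\<close>.\<close>

lemma GCC_slow_lower_bound:
  assumes "0 < v" "a < pi" "0 < a" "\<epsilon> \<le> pi/2" "GCC v a \<epsilon> T"
  shows "(pi - a) / v \<le> T"
proof (rule ccontr)
  assume "\<not> (pi - a) / v \<le> T"
  then have "v * T < pi - a" using assms(1) by (simp add: field_simps)
  obtain t where t: "0 < t" "t < T" "meridian 0 t \<in> omega v a \<epsilon> t"
    using assms(5) is_ray_meridian[of 0] unfolding GCC_def by blast
  obtain k :: int where k: "v * t < of_int k * pi" "of_int k * pi < v * t + a"
    using meridian_in_omega[OF t(3) assms(4)] by auto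
  have "0 < v * t" "v * t < v * T" using assms(1) t by simp_all
  then have "0 < of_int k * pi" "of_int k * pi < 1 * pi" using k \<open>v * T < pi - a\<close> by linarith+
  then have "(0::real) < of_int k" "of_int k < (1::real)" by (simp_all add: zero_less_mult_iff)
  then show False by simp
qed

definition tilted :: "real \<Rightarrow> real \<Rightarrow> real^3" where
  "tilted \<epsilon> t = cos t *\<^sub>R vector [cos \<epsilon>, 0, sin \<epsilon>] + sin t *\<^sub>R vector [- sin \<epsilon>, 0, cos \<epsilon>]"

lemma is_ray_tilted: "is_ray (tilted \<epsilon>)"
  unfolding is_ray_def tilted_def
  by (intro exI[of _ "vector [cos \<epsilon>, 0, sin \<epsilon>]"] exI[of _ "vector [- sin \<epsilon>, 0, cos \<epsilon>]"])
     (simp add: norm_vec3_eq_1 inner_vec3 algebra_simps)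

text \<open>The great circle starting on latitude \<open>\<epsilon>\<close> and heading north stays above the band
  \<open>|\<phi>| < \<epsilon>\<close> until time \<open>\<pi> - 2\<epsilon>\<close>.\<close>

lemma GCC_lower_bound:
  assumes "0 < \<epsilon>" "\<epsilon> < pi/2" "GCC v a \<epsilon> T"
  shows "pi - 2 * \<epsilon> \<le> T"
proof (rule ccontr)
  assume "\<not> pi - 2 * \<epsilon> \<le> T"
  obtain t where t: "0 < t" "t < T" "tilted \<epsilon> t \<in> omega v a \<epsilon> t"
    using assms(3) is_ray_tilted[of \<epsilon>] unfolding GCC_def by blast
  obtain th ph where tp: "tilted \<epsilon> t = sph th ph" "\<bar>ph\<bar> < \<epsilon>"
    using t(3) unfolding omega_def by auto
  have "sin ph = sin (t + \<epsilon>)"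
    using tp(1) unfolding vec3_eq_iff tilted_def by (simp add: sin_add algebra_simps)
  moreover have "sin ph < sin \<epsilon>" using tp(2) assms(2) by (subst sin_mono_less_eq) auto
  moreover have "sin (t + \<epsilon>) - sin \<epsilon> = 2 * sin (t/2) * cos ((t + 2*\<epsilon>)/2)"
    by (simp add: sin_diff_sin algebra_simps)
  moreover have "sin (t/2) > 0" "cos ((t + 2*\<epsilon>)/2) > 0"
    using t \<open>\<not> pi - 2 * \<epsilon> \<le> T\<close> assms(1,2) by (auto intro!: sin_gt_zero cos_gt_zero_pi)
  ultimately show False by (smt (verit) mult_pos_pos)
qed

section \<open>Upper bounds\<close>

text \<open>Even and odd crossings are passed by the window in steps of \<open>2\<pi>v\<close>; starting from the
  parity whose first crossing is at most \<open>\<pi> + \<pi>v\<close> ahead of the window keeps the wait near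
  \<open>(\<pi> - a)/v\<close>.\<close>

lemma slow_crossing_in_window:
  assumes v: "0 < v" "2 * pi * v < a" and "a < pi"
  shows "\<exists>k::nat. real k * pi \<le> (pi - a)/v + 4*pi \<and> angle_in_arc a (C + real k * pi * (1 - v))"
proof -
  obtain m :: int where m: "0 < C + 2*pi * of_int m" "C + 2*pi * of_int m \<le> 2*pi"
    using exists_int_shift_into_2pi by blast
  obtain k0 :: nat and m0 :: int where k0: "k0 \<le> 1" and
    y0: "0 < C + real k0 * pi * (1 - v) + 2*pi * of_int m0"
        "C + real k0 * pi * (1 - v) + 2*pi * of_int m0 \<le> pi + pi * v"
  proof (cases "C + 2*pi * of_int m \<le> pi + pi * v")
    case True
    then show ?thesis using m by (intro that[of 0 m]) auto
  next
    case False
    moreover have "0 < pi * v" using v by simp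
    ultimately show ?thesis using m by (intro that[of 1 "m - 1"]) (auto simp: algebra_simps)
  qed
  define y where "y = C + real k0 * pi * (1 - v) + 2*pi * of_int m0"
  define h where "h = 2 * pi * v"
  have h: "0 < h" "h < a" using v unfolding h_def by auto
  obtain j :: nat where j: "0 < y - real j * h" "y - real j * h < a" "real j * h \<le> max 0 (y - a) + h"
    using exists_nat_step_into_interval[OF h] y0 unfolding y_def by blast
  have "max 0 (y - a) \<le> pi - a + pi * v" using y0 \<open>a < pi\<close> v unfolding y_def by simp
  then have "real j * h \<le> (pi - a) + 3 * pi * v" using j(3) unfolding h_def by linarith
  then have "real j * (2 * pi) \<le> (pi - a)/v + 3 * pi" using v unfolding h_def by (simp add: field_simps)
  moreover have "real k0 * pi \<le> pi" using k0 by simp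
  moreover have "real (k0 + 2 * j) * pi = real k0 * pi + real j * (2 * pi)" by (simp add: algebra_simps)
  ultimately have "real (k0 + 2 * j) * pi \<le> (pi - a)/v + 4*pi" by linarith
  moreover have "C + real (k0 + 2 * j) * pi * (1 - v) + 2*pi * of_int (m0 - int j) = y - real j * h"
    unfolding y_def h_def by (simp add: algebra_simps)
  then have "angle_in_arc a (C + real (k0 + 2 * j) * pi * (1 - v))"
    unfolding angle_in_arc_def using j(1,2) by (intro exI[of _ "m0 - int j"]) simp
  ultimately show ?thesis by blast
qed

lemma GCC_slow:
  assumes "0 < v" "2 * pi * v < a" "a < pi" "0 < \<epsilon>"
  shows "GCC v a \<epsilon> ((pi - a)/v + 6*pi)"
  by (rule GCC_if_crossing_in_window[OF assms(4), where K="(pi - a)/v + 4*pi"])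
     (use slow_crossing_in_window[OF assms(1-3)] pi_gt_zero in auto)

lemma GCC_if_small_drift:
  fixes k h :: int
  assumes "0 < \<epsilon>" "0 < k"
    and \<eta>: "\<eta> = of_int k * pi * (1 - v) - 2*pi * of_int h" "\<eta> \<noteq> 0" "\<bar>\<eta>\<bar> < a"
  shows "\<exists>T>0. GCC v a \<epsilon> T"
proof -
  define B where "B = (2*pi + \<bar>\<eta>\<bar>) / \<bar>\<eta>\<bar>"
  define K where "K = of_int k * (B * pi)"
  have "GCC v a \<epsilon> (pi + K + 1)"
  proof (rule GCC_if_crossing_in_window[OF assms(1), where K=K])
    fix C
    obtain j :: nat where j: "real j * \<bar>\<eta>\<bar> \<le> 2*pi + \<bar>\<eta>\<bar>" "angle_in_arc a (C + real j * \<eta>)"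
      using progression_meets_arc[OF \<eta>(2,3)] by blast
    have "real j \<le> B" unfolding B_def using j(1) \<eta>(2) by (simp add: field_simps)
    then have "of_int k * (real j * pi) \<le> K"
      unfolding K_def using \<open>0 < k\<close> by (intro mult_left_mono mult_right_mono) auto
    then have "real (nat k * j) * pi \<le> K" using \<open>0 < k\<close> by (simp add: mult.assoc)
    moreover have "C + real (nat k * j) * pi * (1 - v) = (C + real j * \<eta>) + 2*pi * of_int (int j * h)"
      using \<open>0 < k\<close> unfolding \<eta>(1) by (simp add: algebra_simps)
    then have "angle_in_arc a (C + real (nat k * j) * pi * (1 - v))"
      using j(2) by (simp only: angle_in_arc_add_int_mult_2pi)
    ultimately show "\<exists>k'::nat. real k' * pi \<le> K \<and> angle_in_arc a (C + real k' * pi * (1 - v))"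
      by blast
  qed simp
  moreover have "0 \<le> K" unfolding K_def B_def using \<open>0 < k\<close> by simp
  then have "pi + K + 1 > 0" by (simp add: add_pos_nonneg)
  ultimately show ?thesis by blast
qed

lemma GCC_fast:
  assumes "0 < a" "a < 2*pi" "0 < \<epsilon>" "\<epsilon> < 1" and v: "(2*pi - a + 2*\<epsilon>) / (2*\<epsilon>) < v"
  shows "GCC v a \<epsilon> (2*pi + 2)"
  unfolding GCC_def
proof (intro allI impI)
  fix x assume ray: "is_ray x"
  obtain t0 where t0: "0 < t0" "t0 \<le> pi" "x t0 $ 3 = 0" using ray_crosses_equator[OF ray] by metis
  have cross: "x (t0 + pi) $ 3 = 0" using ray_add_pi[OF ray, of t0] t0(3) by simp
  have gain: "2*pi - a + 2*\<epsilon> < 2 * \<epsilon> * v" using v \<open>0 < \<epsilon>\<close> by (simp add: pos_divide_less_eq mult.commute)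
  then have "2 * \<epsilon> * 1 < 2 * \<epsilon> * v" using \<open>a < 2*pi\<close> by linarith
  then have "1 < v" using \<open>0 < \<epsilon>\<close> by (simp add: mult_less_cancel_left_pos)
  define q where "q = (2*pi - a) / (2*(v - 1))"
  have "q < \<epsilon>" unfolding q_def using \<open>1 < v\<close> gain by (simp add: pos_divide_less_eq algebra_simps)
  have "0 < q" unfolding q_def using \<open>1 < v\<close> \<open>a < 2*pi\<close> by simp
  text \<open>A half-width \<open>e < \<epsilon>\<close> still large enough for the window to gain \<open>2\<pi> - a\<close>.\<close>
  define e where "e = (\<epsilon> + q) / 2"
  have e: "0 < e" "e < \<epsilon>" "q < e" unfolding e_def using \<open>q < \<epsilon>\<close> \<open>0 < q\<close> by auto
  have "2*pi - a < 2 * e * (v - 1)"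
    using e(3) \<open>1 < v\<close> unfolding q_def by (simp add: pos_divide_less_eq algebra_simps)
  have "\<exists>t. 0 < t \<and> t < 2*pi + 2 \<and> x t \<in> omega v a \<epsilon> t"
  proof (rule ray_meets_omega_near_equator[OF ray cross _ \<open>0 < a\<close>])
    show "\<epsilon> \<le> pi/2" "- \<epsilon> < - e" "- e \<le> e" "e < \<epsilon>" "0 < t0 + pi + - e" "t0 + pi + e < 2 * pi + 2"
      using e \<open>\<epsilon> < 1\<close> t0 pi_gt3 by linarith+
    fix c :: real assume c: "\<bar>c\<bar> \<le> 1"
    have "e < pi/2" using e \<open>\<epsilon> < 1\<close> pi_gt3 by linarith
    then have "\<bar>arctan (c * tan e)\<bar> \<le> e" "\<bar>arctan (c * tan (- e))\<bar> \<le> e"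
      using abs_arctan_mult_tan_le[OF c, of e] abs_arctan_mult_tan_le[OF c, of "-e"] e by auto
    then have "2 * e * (v - 1) \<le> v * (e - - e) - (arctan (c * tan e) - arctan (c * tan (- e)))"
      by (simp add: algebra_simps abs_le_iff)
    then show "2 * pi - a < v * (e - - e) - (arctan (c * tan e) - arctan (c * tan (- e)))"
      using \<open>2*pi - a < 2 * e * (v - 1)\<close> by linarith
  qed
  then show "\<exists>t>0. t < 2*pi + 2 \<and> x t \<in> omega v a \<epsilon> t" by blast
qed

text \<open>Each ray crosses the equator at some \<open>tn\<close> within \<open>\<delta>/2\<close> of \<open>[-\<epsilon>, \<pi> - \<epsilon>)\<close>, so a piece of length
  \<open>\<delta>/2\<close> of \<open>[tn - \<epsilon>, tn + \<epsilon>]\<close> lies in \<open>(0, \<pi> - 2\<epsilon> + \<delta>)\<close>; fast enough windows sweep over it.\<close>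

lemma GCC_fast_near_lower_bound:
  assumes "0 < a" "0 < \<epsilon>" "\<epsilon> < 1" "0 < \<delta>" "\<delta> \<le> \<epsilon>" and v: "12 * pi / \<delta> \<le> v"
  shows "GCC v a \<epsilon> (pi - 2*\<epsilon> + \<delta>)"
  unfolding GCC_def
proof (intro allI impI)
  fix x assume ray: "is_ray x"
  define T where "T = pi - 2*\<epsilon> + \<delta>"
  obtain t0 where t0: "0 < t0" "t0 \<le> pi" "x t0 $ 3 = 0" using ray_crosses_equator[OF ray] by metis
  obtain tn where tn: "x tn $ 3 = 0" "\<delta>/2 - \<epsilon> \<le> tn" "tn < pi - \<epsilon> + \<delta>/2"
  proof (cases "t0 < pi - \<epsilon> + \<delta>/2")
    case True
    then show ?thesis using that[of t0] t0 assms by auto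
  next
    case False
    have "x (t0 - pi) $ 3 = 0" using ray_add_pi[OF ray, of "t0 - pi"] t0(3) by simp
    then show ?thesis using that[of "t0 - pi"] t0 False assms pi_gt3 by auto
  qed
  define s1 where "s1 = max (-\<epsilon>) (-tn) + \<delta>/8"
  define s2 where "s2 = min \<epsilon> (T - tn) - \<delta>/8"
  have "2 * \<epsilon> < pi" using assms pi_gt3 by linarith
  then have "\<delta>/4 \<le> s2 - s1"
    using tn assms unfolding s1_def s2_def T_def min_def max_def by (simp split: if_split)
  have "\<exists>t. 0 < t \<and> t < T \<and> x t \<in> omega v a \<epsilon> t"
  proof (rule ray_meets_omega_near_equator[OF ray tn(1) _ \<open>0 < a\<close>])
    show "\<epsilon> \<le> pi/2" using assms pi_gt3 by linarith
    show "- \<epsilon> < s1" "s1 \<le> s2" "s2 < \<epsilon>" "0 < tn + s1" "tn + s2 < T"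
      using \<open>\<delta>/4 \<le> s2 - s1\<close> assms unfolding s1_def s2_def by (simp_all add: min_def max_def)
    fix c :: real
    have "12 * pi \<le> v * \<delta>" using v assms by (simp add: pos_divide_le_eq)
    moreover have "0 \<le> v" using v assms by (smt (verit) divide_pos_pos pi_gt_zero)
    with \<open>\<delta>/4 \<le> s2 - s1\<close> have "v * (\<delta>/4) \<le> v * (s2 - s1)" by (rule mult_left_mono)
    moreover have "arctan (c * tan s2) - arctan (c * tan s1) < pi"
      using arctan_ubound[of "c * tan s2"] arctan_lbound[of "c * tan s1"] by simp
    ultimately show "2 * pi - a < v * (s2 - s1) - (arctan (c * tan s2) - arctan (c * tan s1))"
      using \<open>0 < a\<close> by linarith
  qed
  then show "\<exists>t>0. t < pi - 2*\<epsilon> + \<delta> \<and> x t \<in> omega v a \<epsilon> t" unfolding T_def by blast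
qed

section \<open>Critical speeds and asymptotics\<close>

lemma T0_infinite_imp_resonant:
  assumes "0 < \<epsilon>" "0 < N" "2*pi / real N < a" "T0 v a \<epsilon> = \<infinity>"
  obtains k h :: int where "0 < k" "k \<le> int N" "of_int k * (1 - v) = 2 * of_int h"
proof -
  obtain h k :: int where hk: "0 < k" "k \<le> int N" "\<bar>of_int k * ((1 - v)/2) - of_int h\<bar> < 1 / real N"
    using Dirichlet_approx[OF assms(2), of "(1 - v)/2"] by metis
  define \<eta> where "\<eta> = of_int k * pi * (1 - v) - 2*pi * of_int h"
  have "\<eta> = 2*pi * (of_int k * ((1 - v)/2) - of_int h)" unfolding \<eta>_def by (simp add: algebra_simps)
  then have "\<bar>\<eta>\<bar> = 2*pi * \<bar>of_int k * ((1 - v)/2) - of_int h\<bar>" by (simp add: abs_mult)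
  then have "\<bar>\<eta>\<bar> < 2*pi * (1 / real N)" using mult_strict_left_mono[OF hk(3), of "2*pi"] by simp
  then have "\<bar>\<eta>\<bar> < a" using assms(3) by simp
  have "\<eta> = 0"
  proof (rule ccontr)
    assume "\<eta> \<noteq> 0"
    then obtain T where "T > 0" "GCC v a \<epsilon> T"
      using GCC_if_small_drift[OF assms(1) hk(1) \<eta>_def _ \<open>\<bar>\<eta>\<bar> < a\<close>] by blast
    then show False using T0_less_infinity assms(4) by fastforce
  qed
  then have "pi * (of_int k * (1 - v) - 2 * of_int h) = 0" unfolding \<eta>_def by (simp add: algebra_simps)
  then have "of_int k * (1 - v) = 2 * of_int h" by simp
  then show ?thesis using hk that by blast
qed

lemma abs_resonance_index_le:
  fixes k h :: int
  assumes "0 < v" "v \<le> w" "1 \<le> w" "0 < k" "k \<le> int N" "of_int k * (1 - v) = 2 * of_int h"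
  shows "\<bar>of_int h\<bar> \<le> real N * w"
proof -
  have k: "(0::real) < of_int k" "of_int k \<le> real N" using assms(4,5) by simp_all
  have "of_int k * (1 - v) = of_int k - of_int k * v" by (simp add: algebra_simps)
  moreover have "0 < of_int k * v" using k assms(1) by simp
  ultimately have "2 * of_int h < real N" using assms(6) k by linarith
  have "of_int k * (1 - w) \<le> of_int k * (1 - v)" using k assms(2) by simp
  moreover have "real N * (1 - w) \<le> of_int k * (1 - w)" using k assms(3) by (intro mult_right_mono_neg) auto
  moreover have "real N * (1 - w) = real N - real N * w" by (simp add: algebra_simps)
  moreover have "0 \<le> real N * w" "real N \<le> real N * w" using assms(3) mult_left_mono[of 1 w "real N"] by simp_all
  ultimately show ?thesis using assms(6) \<open>2 * of_int h < real N\<close> by (simp add: abs_le_iff)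
qed

lemma finite_critical_speeds:
  assumes a: "0 < a" "a < 2*pi" and "0 < \<epsilon>" "\<epsilon> < 1"
  shows "finite {v. v > 0 \<and> T0 v a \<epsilon> = \<infinity>}"
proof -
  define v1 where "v1 = (2*pi - a + 2*\<epsilon>) / (2*\<epsilon>)"
  have "1 < v1" unfolding v1_def using assms by (simp add: field_simps)
  define N :: nat where "N = nat \<lceil>2*pi/a\<rceil> + 1"
  have "0 < N" unfolding N_def by simp
  have "2*pi/a < real N" unfolding N_def by linarith
  then have N: "2*pi / real N < a" using a \<open>0 < N\<close> by (simp add: field_simps)
  define M where "M = \<lceil>real N * v1\<rceil>"
  define S where "S = (\<lambda>(k, h). 1 - 2 * of_int h / of_int k :: real) ` ({1..int N} \<times> {-M..M})"
  have "{v. v > 0 \<and> T0 v a \<epsilon> = \<infinity>} \<subseteq> S"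
  proof
    fix v assume "v \<in> {v. v > 0 \<and> T0 v a \<epsilon> = \<infinity>}"
    then have v: "0 < v" "T0 v a \<epsilon> = \<infinity>" by auto
    have "v \<le> v1"
    proof (rule ccontr)
      assume "\<not> v \<le> v1"
      then have "GCC v a \<epsilon> (2*pi + 2)" using GCC_fast[OF assms] unfolding v1_def by simp
      then show False using T0_less_infinity[of "2*pi + 2"] v(2) pi_gt_zero by fastforce
    qed
    obtain k h :: int where k: "0 < k" "k \<le> int N" and kh: "of_int k * (1 - v) = 2 * of_int h"
      using T0_infinite_imp_resonant[OF \<open>0 < \<epsilon>\<close> \<open>0 < N\<close> N v(2)] by metis
    have "\<bar>of_int h\<bar> \<le> real N * v1"
      using abs_resonance_index_le[OF v(1) \<open>v \<le> v1\<close> _ k kh] \<open>1 < v1\<close> by simp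
    then have "h \<in> {-M..M}" unfolding M_def by (simp add: abs_le_iff le_ceiling_iff minus_le_iff)
    moreover have "v = 1 - 2 * of_int h / of_int k" using kh k by (simp add: field_simps)
    ultimately show "v \<in> S" unfolding S_def using k by force
  qed
  moreover have "finite S" unfolding S_def by simp
  ultimately show ?thesis by (rule finite_subset)
qed

lemma T0_slow_asymptotics:
  assumes a: "0 < a" "a < pi" and "\<epsilon> \<le> pi/2" "0 < \<epsilon>"
  shows "((\<lambda>v. T0 v a \<epsilon> * ereal (v / (pi - a))) \<longlongrightarrow> 1) (at_right 0)"
proof -
  define F where "F v = T0 v a \<epsilon> * ereal (v / (pi - a))" for v
  have "pi - a > 0" using a by simp
  have slow: "eventually (\<lambda>v. v \<in> {0<..<a/(2*pi)}) (at_right 0)"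
    using a by (intro eventually_at_right_real) simp
  have lower: "eventually (\<lambda>v. ereal 1 \<le> F v) (at_right 0)"
    using slow
  proof (rule eventually_mono)
    fix v assume v: "v \<in> {0<..<a/(2*pi)}"
    have "ereal ((pi - a)/v) \<le> T0 v a \<epsilon>"
      by (rule T0_ge) (use GCC_slow_lower_bound[of v a \<epsilon>] v assms in auto)
    then have "ereal ((pi - a)/v) * ereal (v / (pi - a)) \<le> F v"
      unfolding F_def by (rule ereal_mult_right_mono) (use v \<open>pi - a > 0\<close> in simp)
    moreover have "(pi - a)/v * (v / (pi - a)) = 1" using v \<open>pi - a > 0\<close> by simp
    ultimately show "ereal 1 \<le> F v" by simp
  qed
  have upper: "eventually (\<lambda>v. F v \<le> ereal (1 + 6 * pi * v / (pi - a))) (at_right 0)"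
    using slow
  proof (rule eventually_mono)
    fix v assume v: "v \<in> {0<..<a/(2*pi)}"
    have "2 * pi * v < a" using v by (simp add: field_simps)
    have "(pi - a)/v + 6*pi > 0" using v \<open>pi - a > 0\<close> by (simp add: add_pos_pos)
    then have "T0 v a \<epsilon> \<le> ereal ((pi - a)/v + 6*pi)"
      by (rule T0_le[OF _ GCC_slow]) (use v \<open>2 * pi * v < a\<close> assms in auto)
    then have "F v \<le> ereal ((pi - a)/v + 6*pi) * ereal (v / (pi - a))"
      unfolding F_def by (rule ereal_mult_right_mono) (use v \<open>pi - a > 0\<close> in simp)
    moreover have "((pi - a)/v + 6*pi) * (v / (pi - a)) = 1 + 6 * pi * v / (pi - a)"
      using v \<open>pi - a > 0\<close> by (simp add: field_simps)
    ultimately show "F v \<le> ereal (1 + 6 * pi * v / (pi - a))" by simp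
  qed
  have "((\<lambda>v. 1 + 6 * pi * v / (pi - a)) \<longlongrightarrow> 1 + 6 * pi * 0 / (pi - a)) (at_right 0)"
    by (intro tendsto_intros) (use \<open>pi - a > 0\<close> in simp)
  then have "((\<lambda>v. ereal (1 + 6 * pi * v / (pi - a))) \<longlongrightarrow> ereal 1) (at_right 0)" by simp
  then have "(F \<longlongrightarrow> ereal 1) (at_right 0)" by (rule tendsto_sandwich[OF lower upper, rotated]) simp
  then show ?thesis unfolding F_def by (simp add: one_ereal_def)
qed

lemma T0_fast_limit:
  assumes "0 < a" "0 < \<epsilon>" "\<epsilon> < 1"
  shows "((\<lambda>v. T0 v a \<epsilon>) \<longlongrightarrow> ereal (pi - 2 * \<epsilon>)) at_top"
proof (rule order_tendstoI)
  have "\<epsilon> < pi/2" using assms pi_gt3 by linarith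
  then have lower: "ereal (pi - 2*\<epsilon>) \<le> T0 v a \<epsilon>" for v
    by (intro T0_ge) (use GCC_lower_bound[of \<epsilon> v a] assms in auto)
  fix y assume "y < ereal (pi - 2 * \<epsilon>)"
  then show "eventually (\<lambda>v. y < T0 v a \<epsilon>) at_top"
    using lower by (intro always_eventually allI) (metis less_le_trans)
next
  fix y assume "ereal (pi - 2 * \<epsilon>) < y"
  then obtain z where z: "pi - 2*\<epsilon> < z" "ereal z < y" using ereal_dense2 by force
  define \<delta> where "\<delta> = min \<epsilon> ((z - (pi - 2*\<epsilon>))/2)"
  have "\<delta> \<le> (z - (pi - 2*\<epsilon>))/2" unfolding \<delta>_def by (rule min.cobounded2)
  then have \<delta>: "0 < \<delta>" "\<delta> \<le> \<epsilon>" "pi - 2*\<epsilon> + \<delta> < z" using z assms unfolding \<delta>_def by auto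
  have "2*\<epsilon> < pi" using assms pi_gt3 by linarith
  show "eventually (\<lambda>v. T0 v a \<epsilon> < y) at_top"
    using eventually_ge_at_top[of "12 * pi / \<delta>"]
  proof (rule eventually_mono)
    fix v assume "12 * pi / \<delta> \<le> v"
    then have "T0 v a \<epsilon> \<le> ereal (pi - 2*\<epsilon> + \<delta>)"
      by (intro T0_le[OF _ GCC_fast_near_lower_bound[OF assms \<delta>(1,2)]]) (use \<delta> \<open>2*\<epsilon> < pi\<close> in simp_all)
    also have "\<dots> < ereal z" using \<delta>(3) by simp
    also have "\<dots> < y" by (rule z(2))
    finally show "T0 v a \<epsilon> < y" .
  qed
qed

section \<open>Rational speeds\<close>

lemma near_multiple_of_pi:
  assumes "\<bar>sin t\<bar> < sin \<epsilon>" "0 < \<epsilon>" "\<epsilon> \<le> pi/2"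
  obtains j :: int where "\<bar>t - of_int j * pi\<bar> < \<epsilon>"
proof -
  define j where "j = \<lfloor>t / pi + 1/2\<rfloor>"
  have "of_int j \<le> t/pi + 1/2" "t/pi + 1/2 < of_int j + 1" unfolding j_def by linarith+
  then have "of_int j * pi \<le> t + pi/2" "t + pi/2 < of_int j * pi + pi" by (simp_all add: field_simps)
  then have r: "\<bar>t - of_int j * pi\<bar> \<le> pi/2" by linarith
  have "sin t = sin ((t - of_int j * pi) + of_int j * pi)" by simp
  moreover have "sin (of_int j * pi) = 0" using sin_zero_iff_int2 by blast
  moreover from this have "\<bar>cos (of_int j * pi)\<bar> = 1"
    using sin_cos_squared_add[of "of_int j * pi"] by (simp add: abs_square_eq_1)
  ultimately have "\<bar>sin t\<bar> = \<bar>sin (t - of_int j * pi)\<bar>" by (simp only: sin_add) (simp add: abs_mult)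
  also have "\<dots> = sin \<bar>t - of_int j * pi\<bar>" using r pi_gt_zero by (intro abs_sin_eq_sin_abs) linarith
  finally have "sin \<bar>t - of_int j * pi\<bar> < sin \<epsilon>" using assms(1) by simp
  then have "\<bar>t - of_int j * pi\<bar> < \<epsilon>" using r assms(2,3) by (subst (asm) sin_mono_less_eq) auto
  then show ?thesis by (rule that)
qed

lemma rational_speed_misses_meridian:
  fixes P Q k j :: int
  assumes "0 < P" "0 < Q" "v = of_int P / of_int Q"
    and "\<epsilon> \<le> pi / (4 * of_int P)" "a \<le> pi / (4 * of_int Q)" "\<bar>t - of_int j * pi\<bar> < \<epsilon>"
  shows "\<not> (v * t < pi / (2 * of_int Q) + of_int k * pi \<and> pi / (2 * of_int Q) + of_int k * pi < v * t + a)"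
proof
  assume window: "v * t < pi / (2 * of_int Q) + of_int k * pi \<and> pi / (2 * of_int Q) + of_int k * pi < v * t + a"
  define u where "u = t - of_int j * pi"
  have "of_int P * \<bar>u\<bar> < of_int P * \<epsilon>" using assms(1,6) unfolding u_def by simp
  moreover have "of_int P * \<epsilon> \<le> pi / 4" using assms(1,4) by (simp add: field_simps)
  ultimately have "of_int P * \<bar>u\<bar> < pi / 4" by linarith
  then have Pu: "\<bar>of_int P * u\<bar> < pi / 4" using assms(1) by (simp add: abs_mult)
  have Qa: "of_int Q * a \<le> pi / 4" using assms(2,5) by (simp add: field_simps)
  have Q: "(0::real) < of_int Q" using assms(2) by simp
  have "of_int Q * (v * t) < of_int Q * (pi / (2 * of_int Q) + of_int k * pi)"
    "of_int Q * (pi / (2 * of_int Q) + of_int k * pi) < of_int Q * (v * t) + of_int Q * a"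
    using window mult_strict_left_mono[OF _ Q] by (simp_all only: distrib_left[symmetric])
  moreover have "of_int Q * (v * t) = of_int P * of_int j * pi + of_int P * u"
    using assms(2,3) unfolding u_def by (simp add: algebra_simps)
  moreover have "of_int Q * (pi / (2 * of_int Q) + of_int k * pi) = pi / 2 + of_int Q * of_int k * pi"
    using Q by (simp add: field_simps)
  ultimately have "of_int P * of_int j * pi + of_int P * u < pi / 2 + of_int Q * of_int k * pi"
    "pi / 2 + of_int Q * of_int k * pi < of_int P * of_int j * pi + of_int P * u + of_int Q * a"
    by simp_all
  moreover define n where "n = Q * k - P * j"
  then have "of_int n * pi = of_int Q * of_int k * pi - of_int P * of_int j * pi"
    by (simp only: of_int_diff of_int_mult left_diff_distrib)
  moreover have "- (pi / 4) < of_int P * u" "of_int P * u < pi / 4" using Pu by (simp_all add: abs_less_iff)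
  ultimately have "(-1) * pi < of_int n * pi" "of_int n * pi < 0 * pi" using Qa by linarith+
  then have "-1 < n" "n < 0" by (simp_all only: mult_less_cancel_right_pos[OF pi_gt_zero])
  then show False by simp
qed

lemma T0_rational_speed_infinite:
  assumes "v \<in> \<rat>" "0 < v"
  shows "\<exists>a0 > 0. \<exists>\<epsilon>0 > 0. \<forall>a' \<epsilon>'. 0 < a' \<and> a' < a0 \<and> 0 < \<epsilon>' \<and> \<epsilon>' < \<epsilon>0 \<longrightarrow> T0 v a' \<epsilon>' = \<infinity>"
proof -
  obtain P Q :: int where Q: "0 < Q" and v: "v = of_int P / of_int Q" using Rats_cases'[OF assms(1)] by metis
  have P: "0 < P" using assms(2) Q v by (simp add: zero_less_divide_iff)
  define a0 where "a0 = pi / (4 * of_int Q)"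
  define \<epsilon>0 where "\<epsilon>0 = pi / (4 * of_int P)"
  have "\<epsilon>0 \<le> pi/2" using P unfolding \<epsilon>0_def by (simp add: field_simps)
  have "T0 v a' \<epsilon>' = \<infinity>" if small: "0 < a'" "a' < a0" "0 < \<epsilon>'" "\<epsilon>' < \<epsilon>0" for a' \<epsilon>'
  proof (rule T0_eq_infinity notI)+
    fix T assume "GCC v a' \<epsilon>' T"
    then obtain t where t: "meridian (pi / (2 * of_int Q)) t \<in> omega v a' \<epsilon>' t"
      using is_ray_meridian unfolding GCC_def by blast
    have "\<epsilon>' \<le> pi/2" using small(4) \<open>\<epsilon>0 \<le> pi/2\<close> by linarith
    obtain k :: int where k: "v * t < pi / (2 * of_int Q) + of_int k * pi"
      "pi / (2 * of_int Q) + of_int k * pi < v * t + a'" "\<bar>sin t\<bar> < sin \<epsilon>'"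
      using meridian_in_omega[OF t \<open>\<epsilon>' \<le> pi/2\<close>] by blast
    obtain j :: int where "\<bar>t - of_int j * pi\<bar> < \<epsilon>'"
      using near_multiple_of_pi[OF k(3) small(3) \<open>\<epsilon>' \<le> pi/2\<close>] by blast
    then show False
      using rational_speed_misses_meridian[OF P Q v, of \<epsilon>' a' t j k] k small
      unfolding a0_def \<epsilon>0_def by linarith
  qed
  moreover have "0 < a0" "0 < \<epsilon>0" using P Q unfolding a0_def \<epsilon>0_def by simp_all
  ultimately show ?thesis by blast
qed

theorem proposition3p1:
  fixes a \<epsilon> :: real
  assumes "0 < a" "a < 2 * pi" "0 < \<epsilon>" "\<epsilon> < 1"
  shows "finite {v. v > 0 \<and> T0 v a \<epsilon> = \<infinity>}
    \<and> (a < pi \<longrightarrow> ((\<lambda>v. T0 v a \<epsilon> * ereal (v / (pi - a))) \<longlongrightarrow> 1) (at_right 0))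
    \<and> (\<forall>v. v > (2 * pi - a + 2 * \<epsilon>) / (2 * \<epsilon>) \<longrightarrow> T0 v a \<epsilon> < \<infinity>)
    \<and> ((\<lambda>v. T0 v a \<epsilon>) \<longlongrightarrow> ereal (pi - 2 * \<epsilon>)) at_top
    \<and> (\<forall>v. v \<in> \<rat> \<and> v > 0 \<longrightarrow>
         (\<exists>a0 > 0. \<exists>\<epsilon>0 > 0. \<forall>a' \<epsilon>'. 0 < a' \<and> a' < a0 \<and> 0 < \<epsilon>' \<and> \<epsilon>' < \<epsilon>0
              \<longrightarrow> T0 v a' \<epsilon>' = \<infinity>))"
proof (intro conjI impI allI)
  have "\<epsilon> \<le> pi/2" using assms pi_gt3 by linarith
  show "finite {v. v > 0 \<and> T0 v a \<epsilon> = \<infinity>}" by (rule finite_critical_speeds[OF assms])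
  show "a < pi \<Longrightarrow> ((\<lambda>v. T0 v a \<epsilon> * ereal (v / (pi - a))) \<longlongrightarrow> 1) (at_right 0)"
    using T0_slow_asymptotics \<open>\<epsilon> \<le> pi/2\<close> assms by blast
  show "((\<lambda>v. T0 v a \<epsilon>) \<longlongrightarrow> ereal (pi - 2 * \<epsilon>)) at_top"
    using T0_fast_limit assms by blast
  show "T0 v a \<epsilon> < \<infinity>" if "(2 * pi - a + 2 * \<epsilon>) / (2 * \<epsilon>) < v" for v
    using T0_less_infinity[OF _ GCC_fast[OF assms that]] pi_gt_zero by simp
  show "\<exists>a0 > 0. \<exists>\<epsilon>0 > 0. \<forall>a' \<epsilon>'. 0 < a' \<and> a' < a0 \<and> 0 < \<epsilon>' \<and> \<epsilon>' < \<epsilon>0 \<longrightarrow> T0 v a' \<epsilon>' = \<infinity>"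
    if "v \<in> \<rat> \<and> v > 0" for v
    using T0_rational_speed_infinite that by blast
qed
end
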